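(* Let $\mathcal{C}$ and $\mathcal{C}'$ be non-attacking $q$-configurations. Then there exists $N$ such that for every $n\ge N$ with $\mathrm{inloss}_n(\mathcal{C}) = \mathrm{inloss}_n(\mathcal{C}')$ we have $\gamma(\mathcal{C}') - \gamma(\mathcal{C}) = \eta_n(\mathcal{C}') - \eta_n(\mathcal{C})$.
   Context: For $n \in \mathbb{N}$ let $I_n = \{\lfloor (2-n)/2 \rfloor, \ldots, \lfloor n/2 \rfloor\}$ and $\mathcal{B}_n = I_n \times I_n$. A $q$-configuration is a set $\mathcal{C} \subset \mathbb{Z}\times\mathbb{Z}$ with $|\mathcal{C}|=q$. For $Q=(x,y)$, $A(Q) = \{(x+i,y),(x,y+i),(x+i,y+i),(x+i,y-i) : i \in \mathbb{Z}\setminus\{0\}\}$ and $A(\mathcal{C}) = \bigcup_{Q\in\mathcal{C}} A(Q)$. $\mathcal{C}$ is non-attacking if $Q'\notin A(Q)$ for all distinct $Q,Q'\in\mathcal{C}$. The attacking number is $a_{\mathcal{C}}(s) = \#\{Q \in \mathcal{C} : s \in A(Q)\}$ and $\mathrm{inloss}_n(\mathcal{C}) = \sum_{s \in A(\mathcal{C})\cap\mathcal{B}_n} (a_{\mathcal{C}}(s) - 1)$. A Queen at $(x_1,x_2)$ is even if $x_1-x_2\equiv 0\pmod 2$ and odd otherwise; if $\mathcal{C}$ has $e$ even and $o$ odd Queens, $\gamma(\mathcal{C}) = 12\binom{e}{2}+12\binom{o}{2}+10eo$, and $\eta_n(\mathcal{C}) = \sum_{s\in A(\mathcal{C})\cap\mathcal{B}_n}\left[\binom{a_{\mathcal{C}}(s)}{2}-(a_{\mathcal{C}}(s)-1)\right]$.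 *)

theory Defs
  imports Main
begin

type_synonym point = "int \<times> int"

definition I_set :: "nat \<Rightarrow> int set" where
  "I_set n = {(2 - int n) div 2 .. int n div 2}"

definition board :: "nat \<Rightarrow> point set" where
  "board n = I_set n \<times> I_set n"

definition attacks :: "point \<Rightarrow> point set" where
  "attacks Q = {s. \<exists>i::int. i \<noteq> 0 \<and>
      (s = (fst Q + i, snd Q) \<or> s = (fst Q, snd Q + i) \<or>
       s = (fst Q + i, snd Q + i) \<or> s = (fst Q + i, snd Q - i))}"

definition attacked :: "point set \<Rightarrow> point set" where
  "attacked C = (\<Union>Q\<in>C. attacks Q)"

definition q_configuration :: "nat \<Rightarrow> point set \<Rightarrow> bool" where
  "q_configuration q C \<longleftrightarrow> finite C \<and> card C = q"

definition non_attacking :: "point set \<Rightarrow> bool" where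
  "non_attacking C \<longleftrightarrow> (\<forall>Q\<in>C. \<forall>Q'\<in>C. Q \<noteq> Q' \<longrightarrow> Q' \<notin> attacks Q)"

definition attacking_number :: "point set \<Rightarrow> point \<Rightarrow> nat" where
  "attacking_number C s = card {Q \<in> C. s \<in> attacks Q}"

definition inloss :: "nat \<Rightarrow> point set \<Rightarrow> int" where
  "inloss n C = (\<Sum>s \<in> attacked C \<inter> board n. int (attacking_number C s) - 1)"

definition even_queen :: "point \<Rightarrow> bool" where
  "even_queen Q \<longleftrightarrow> (fst Q - snd Q) mod 2 = 0"

definition gamma :: "point set \<Rightarrow> int" where
  "gamma C = (let e = card {Q \<in> C. even_queen Q}; od = card {Q \<in> C. \<not> even_queen Q} in
     12 * int (e choose 2) + 12 * int (od choose 2) + 10 * int e * int od)"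

definition eta :: "nat \<Rightarrow> point set \<Rightarrow> int" where
  "eta n C = (\<Sum>s \<in> attacked C \<inter> board n.
     int (attacking_number C s choose 2) - (int (attacking_number C s) - 1))"

end

theory Submission
  imports Defs
begin

(* Since (a choose 2) counts the pairs of queens attacking a square, summing it over the board
   counts, for every pair of queens, the squares both attack. For non-attacking queens Q, Q' each
   attack line of Q meets each non-parallel line of Q' in one point: this gives 10 squares, plus
   the 2 crossings of a diagonal with an anti-diagonal, which are lattice points exactly when Q
   and Q' have the same parity. Once the board contains these finitely many squares the sum is
   therefore gamma C, and eta_n = (sum of (a choose 2)) - inloss_n. *)

lemma attacks_iff:
  "s \<in> attacks Q \<longleftrightarrow> s \<noteq> Q \<and> (fst s = fst Q \<or> snd s = snd Q \<or>
     fst s - snd s = fst Q - snd Q \<or> fst s + snd s = fst Q + snd Q)"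
proof
  assume "s \<in> attacks Q"
  then show "s \<noteq> Q \<and> (fst s = fst Q \<or> snd s = snd Q \<or>
     fst s - snd s = fst Q - snd Q \<or> fst s + snd s = fst Q + snd Q)"
    by (cases Q) (auto simp: attacks_def)
next
  obtain x y a b where [simp]: "s = (x, y)" "Q = (a, b)" by (cases s, cases Q)
  assume "s \<noteq> Q \<and> (fst s = fst Q \<or> snd s = snd Q \<or>
     fst s - snd s = fst Q - snd Q \<or> fst s + snd s = fst Q + snd Q)"
  then consider "x = a" "y \<noteq> b" | "x \<noteq> a" "y = b \<or> x - y = a - b \<or> x + y = a + b" by auto
  then show "s \<in> attacks Q"
  proof cases
    case 1
    then show ?thesis by (auto simp: attacks_def intro!: exI[of _ "y - b"])
  next
    case 2
    then show ?thesis by (auto simp: attacks_def intro!: exI[of _ "x - a"])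
  qed
qed

lemma diagonal_antidiagonal_meet_even:
  "u + v = 2 * k \<Longrightarrow> {p :: point. fst p - snd p = u \<and> fst p + snd p = v} = {(k, k - u)}"
  by auto

lemma diagonal_antidiagonal_disjoint_odd:
  "odd (u + v) \<Longrightarrow> {p :: point. fst p - snd p = u \<and> fst p + snd p = v} = {}"
  by auto

lemma attacks_Int_attacks:
  fixes a b c d :: int
  assumes "c \<noteq> a" "d \<noteq> b" "c - d \<noteq> a - b" "c + d \<noteq> a + b"
  shows "attacks (a, b) \<inter> attacks (c, d) =
    {(a, d), (c, b), (a, a - c + d), (a, c + d - a), (b + c - d, b), (c + d - b, b),
     (c, c - a + b), (c, a + b - c), (a - b + d, d), (a + b - d, d)} \<union>
    {p. fst p - snd p = a - b \<and> fst p + snd p = c + d} \<union>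
    {p. fst p - snd p = c - d \<and> fst p + snd p = a + b}"
proof (intro set_eqI iffI)
  fix p :: point
  obtain x y where p: "p = (x, y)" by (cases p)
  assume "p \<in> attacks (a, b) \<inter> attacks (c, d)"
  then have "x = a \<or> y = b \<or> x - y = a - b \<or> x + y = a + b"
    and "x = c \<or> y = d \<or> x - y = c - d \<or> x + y = c + d"
    by (auto simp: attacks_iff p)
  then show "p \<in> {(a, d), (c, b), (a, a - c + d), (a, c + d - a), (b + c - d, b), (c + d - b, b),
     (c, c - a + b), (c, a + b - c), (a - b + d, d), (a + b - d, d)} \<union>
    {p. fst p - snd p = a - b \<and> fst p + snd p = c + d} \<union>
    {p. fst p - snd p = c - d \<and> fst p + snd p = a + b}"
    unfolding p using assms by (elim disjE) auto
next
  fix p :: point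
  assume "p \<in> {(a, d), (c, b), (a, a - c + d), (a, c + d - a), (b + c - d, b), (c + d - b, b),
     (c, c - a + b), (c, a + b - c), (a - b + d, d), (a + b - d, d)} \<union>
    {p. fst p - snd p = a - b \<and> fst p + snd p = c + d} \<union>
    {p. fst p - snd p = c - d \<and> fst p + snd p = a + b}"
  then show "p \<in> attacks (a, b) \<inter> attacks (c, d)"
    using assms by (auto simp: attacks_iff)
qed

lemma card_attacks_Int_attacks:
  assumes "Q \<noteq> Q'" "Q' \<notin> attacks Q"
  shows "card (attacks Q \<inter> attacks Q') = (if even_queen Q = even_queen Q' then 12 else 10)"
proof -
  obtain a b c d where Q: "Q = (a, b)" and Q': "Q' = (c, d)" by (cases Q, cases Q')
  have ne: "c \<noteq> a" "d \<noteq> b" "c - d \<noteq> a - b" "c + d \<noteq> a + b"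
    using assms by (auto simp: attacks_iff Q Q')
  have parity: "even_queen Q = even_queen Q' \<longleftrightarrow> even (a - b + c + d)"
    unfolding Q Q' even_queen_def fst_conv snd_conv by presburger
  show ?thesis
  proof (cases "even (a - b + c + d)")
    case True
    then obtain k where k: "a - b + c + d = 2 * k" by (rule evenE)
    have "a - b + (c + d) = 2 * k" "c - d + (a + b) = 2 * (k + b - d)" using k by presburger+
    note diagonals = this[THEN diagonal_antidiagonal_meet_even]
    have "card (attacks Q \<inter> attacks Q') = card
      ({(a, d), (c, b), (a, a - c + d), (a, c + d - a), (b + c - d, b), (c + d - b, b),
        (c, c - a + b), (c, a + b - c), (a - b + d, d), (a + b - d, d)} \<union>
       {(k, k - (a - b))} \<union> {(k + b - d, k + b - d - (c - d))})"
      unfolding Q Q' attacks_Int_attacks[OF ne] diagonals ..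
    also have "\<dots> = 12" using ne k by simp
    finally show ?thesis using True parity by simp
  next
    case False
    then have "odd (a - b + (c + d))" "odd (c - d + (a + b))" by presburger+
    note diagonals = this[THEN diagonal_antidiagonal_disjoint_odd]
    have "card (attacks Q \<inter> attacks Q') = card
      {(a, d), (c, b), (a, a - c + d), (a, c + d - a), (b + c - d, b), (c + d - b, b),
       (c, c - a + b), (c, a + b - c), (a - b + d, d), (a + b - d, d)}"
      unfolding Q Q' attacks_Int_attacks[OF ne] diagonals Un_empty_right ..
    also have "\<dots> = 10" using ne by simp
    finally show ?thesis using False parity by simp
  qed
qed

lemma mem_boardI:
  assumes "2 * \<bar>x\<bar> < int n" "2 * \<bar>y\<bar> < int n"
  shows "(x, y) \<in> board n"
  using assms unfolding board_def I_set_def by (auto; presburger)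

lemma eventually_subset_board:
  "finite S \<Longrightarrow> \<forall>\<^sub>F n in sequentially. S \<subseteq> board n"
proof (induction S rule: finite_induct)
  case empty
  then show ?case by simp
next
  case (insert p S)
  obtain x y where p: "p = (x, y)" by (cases p)
  have "\<forall>\<^sub>F n in sequentially. p \<in> board n"
    unfolding eventually_sequentially p
    by (rule exI[of _ "nat (2 * (\<bar>x\<bar> + \<bar>y\<bar>) + 1)"]) (auto intro!: mem_boardI)
  with insert.IH show ?case by eventually_elim simp
qed

lemma two_times_choose_two: "2 * int (n choose 2) = int n * (int n - 1)"
  by (induction n) (simp_all add: numeral_2_eq_2 algebra_simps)

lemma sum_distinct_pairs_of_bool:
  assumes "finite C"
  shows "(\<Sum>Q\<in>C. \<Sum>Q'\<in>C - {Q}. of_bool (P Q \<and> P Q') :: int) = 2 * int (card {Q\<in>C. P Q} choose 2)"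
proof -
  define T where "T = {Q\<in>C. P Q}"
  have "finite T" using assms by (simp add: T_def)
  have "(\<Sum>Q'\<in>C - {Q}. of_bool (P Q \<and> P Q') :: int) = of_bool (P Q) * (int (card T) - 1)"
    if "Q \<in> C" for Q
  proof (cases "P Q")
    case True
    then have "Q \<in> T" using that by (simp add: T_def)
    then have "card T \<ge> 1" using \<open>finite T\<close> by (auto simp: Suc_le_eq card_gt_0_iff)
    have "(C - {Q}) \<inter> {Q'. P Q \<and> P Q'} = T - {Q}" using True by (auto simp: T_def)
    then show ?thesis
      using assms True \<open>Q \<in> T\<close> \<open>card T \<ge> 1\<close> by (simp add: card_Diff_singleton of_nat_diff)
  qed simp
  then have "(\<Sum>Q\<in>C. \<Sum>Q'\<in>C - {Q}. of_bool (P Q \<and> P Q') :: int) = int (card T) * (int (card T) - 1)"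
    using assms by (simp add: sum_distrib_right T_def Int_def conj_commute)
  then show ?thesis by (simp add: two_times_choose_two T_def)
qed

lemma double_counting_pairs:
  fixes A :: "'a \<Rightarrow> 'b set"
  assumes "finite C" "finite S"
  shows "2 * (\<Sum>s\<in>S. int (card {Q\<in>C. s \<in> A Q} choose 2)) =
    (\<Sum>Q\<in>C. \<Sum>Q'\<in>C - {Q}. int (card (A Q \<inter> A Q' \<inter> S)))"
proof -
  have "(\<Sum>Q\<in>C. \<Sum>Q'\<in>C - {Q}. int (card (A Q \<inter> A Q' \<inter> S))) =
      (\<Sum>Q\<in>C. \<Sum>Q'\<in>C - {Q}. \<Sum>s\<in>S. of_bool (s \<in> A Q \<and> s \<in> A Q'))"
    using assms(2) by (simp add: Int_def conj_commute)
  also have "\<dots> = (\<Sum>s\<in>S. \<Sum>Q\<in>C. \<Sum>Q'\<in>C - {Q}. of_bool (s \<in> A Q \<and> s \<in> A Q'))"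
    by (simp add: sum.swap[where A = S])
  also have "\<dots> = (\<Sum>s\<in>S. 2 * int (card {Q\<in>C. s \<in> A Q} choose 2))"
    by (rule sum.cong[OF refl], rule sum_distinct_pairs_of_bool[OF assms(1)])
  finally show ?thesis by (simp add: sum_distrib_left)
qed

lemma sum_parity_weights_eq_gamma:
  assumes "finite C"
  shows "(\<Sum>Q\<in>C. \<Sum>Q'\<in>C - {Q}. if even_queen Q = even_queen Q' then 12 else 10) = 2 * gamma C"
proof -
  define ev where "ev = card {Q\<in>C. even_queen Q}"
  define od where "od = card {Q\<in>C. \<not> even_queen Q}"
  have "(\<Sum>Q'\<in>C - {Q}. if even_queen Q = even_queen Q' then 12 else 10 :: int) =
      (if even_queen Q then 12 * (int ev - 1) + 10 * int od else 12 * (int od - 1) + 10 * int ev)"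
    if "Q \<in> C" for Q
  proof -
    have "(\<Sum>Q'\<in>C - {Q}. if even_queen Q = even_queen Q' then 12 else 10 :: int) =
        (\<Sum>Q'\<in>C. if even_queen Q = even_queen Q' then 12 else 10) - 12"
      using that assms by (simp add: sum_diff1)
    also have "\<dots> = (if even_queen Q then 12 * int ev + 10 * int od else 12 * int od + 10 * int ev) - 12"
      using assms by (simp add: sum.If_cases ev_def od_def Int_def Diff_eq[symmetric] set_diff_eq)
    finally show ?thesis by simp
  qed
  then have "(\<Sum>Q\<in>C. \<Sum>Q'\<in>C - {Q}. if even_queen Q = even_queen Q' then 12 else 10 :: int) =
      int ev * (12 * (int ev - 1) + 10 * int od) + int od * (12 * (int od - 1) + 10 * int ev)"
    using assms by (simp add: sum.If_cases ev_def od_def Int_def set_diff_eq)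
  also have "\<dots> = 2 * gamma C"
    unfolding gamma_def Let_def ev_def[symmetric] od_def[symmetric]
    using two_times_choose_two[of ev] two_times_choose_two[of od] by algebra
  finally show ?thesis .
qed

lemma eventually_sum_choose_two_eq_gamma:
  assumes "finite C" "non_attacking C"
  shows "\<forall>\<^sub>F n in sequentially.
    (\<Sum>s\<in>attacked C \<inter> board n. int (attacking_number C s choose 2)) = gamma C"
proof -
  have pair: "card (attacks Q \<inter> attacks Q') = (if even_queen Q = even_queen Q' then 12 else 10)"
    if "Q \<in> C" "Q' \<in> C - {Q}" for Q Q'
    using that assms(2) by (intro card_attacks_Int_attacks) (auto simp: non_attacking_def)
  let ?P = "\<Union>Q\<in>C. \<Union>Q'\<in>C - {Q}. attacks Q \<inter> attacks Q'"
  have "finite (attacks Q \<inter> attacks Q')" if "Q \<in> C" "Q' \<in> C - {Q}" for Q Q'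
    using pair[OF that] by (intro card_ge_0_finite) simp
  with assms(1) have "finite ?P" by blast
  then have "\<forall>\<^sub>F n in sequentially. ?P \<subseteq> board n"
    by (rule eventually_subset_board)
  then show ?thesis
  proof eventually_elim
    case (elim n)
    let ?S = "attacked C \<inter> board n"
    have "finite ?S" by (simp add: board_def I_set_def)
    have "2 * (\<Sum>s\<in>?S. int (attacking_number C s choose 2)) =
        (\<Sum>Q\<in>C. \<Sum>Q'\<in>C - {Q}. int (card (attacks Q \<inter> attacks Q' \<inter> ?S)))"
      unfolding attacking_number_def by (rule double_counting_pairs[OF assms(1) \<open>finite ?S\<close>])
    also have "\<dots> = (\<Sum>Q\<in>C. \<Sum>Q'\<in>C - {Q}. int (card (attacks Q \<inter> attacks Q')))"
    proof (intro sum.cong refl)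
      fix Q Q' assume "Q \<in> C" "Q' \<in> C - {Q}"
      with elim have "attacks Q \<inter> attacks Q' \<subseteq> ?S" by (auto simp: attacked_def)
      then show "int (card (attacks Q \<inter> attacks Q' \<inter> ?S)) = int (card (attacks Q \<inter> attacks Q'))"
        by (simp add: Int_absorb2)
    qed
    also have "\<dots> = (\<Sum>Q\<in>C. \<Sum>Q'\<in>C - {Q}. if even_queen Q = even_queen Q' then 12 else 10)"
      by (intro sum.cong refl) (simp add: pair)
    also have "\<dots> = 2 * gamma C"
      by (rule sum_parity_weights_eq_gamma[OF assms(1)])
    finally show ?case by simp
  qed
qed

lemma eta_eq_sum_choose_two_minus_inloss:
  "eta n C = (\<Sum>s\<in>attacked C \<inter> board n. int (attacking_number C s choose 2)) - inloss n C"
  by (simp add: eta_def inloss_def sum_subtractf)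

theorem mainTheorem8:
  fixes q :: nat and C C' :: "(int \<times> int) set"
  assumes "q_configuration q C" and "q_configuration q C'"
    and "non_attacking C" and "non_attacking C'"
  shows "\<exists>N::nat. \<forall>n\<ge>N. inloss n C = inloss n C' \<longrightarrow>
           gamma C' - gamma C = eta n C' - eta n C"
proof -
  have "finite C" "finite C'"
    using assms(1,2) by (simp_all add: q_configuration_def)
  with assms(3,4) have "\<forall>\<^sub>F n in sequentially.
      eta n C = gamma C - inloss n C \<and> eta n C' = gamma C' - inloss n C'"
    by (auto intro: eventually_conj eventually_sum_choose_two_eq_gamma
        simp: eta_eq_sum_choose_two_minus_inloss)
  then obtain N where "\<forall>n\<ge>N. eta n C = gamma C - inloss n C \<and> eta n C' = gamma C' - inloss n C'"
    by (auto simp: eventually_sequentially)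
  then show ?thesis by (intro exI[of _ N]) auto
qed

end
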